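(* A formal series $\tilde\varphi\in\mathbb{C}[[z^{-1}]]$ is resurgent if and only if there exists a discrete filtered set $\Omega$ such that $\tilde\varphi$ is $\Omega$-resurgent. In other words, $$\hat{\mathscr{R}}=\bigcup_{\Omega\ \text{d.f.s.}}\hat{\mathscr{R}}_\Omega,\qquad \tilde{\mathscr{R}}=\bigcup_{\Omega\ \text{d.f.s.}}\tilde{\mathscr{R}}_\Omega .$$
   Context: A convergent power series $\hat\varphi\in\mathbb{C}\{\zeta\}$ is endlessly continuable if for every $L>0$ there is a finite $F_L\subset\mathbb{C}$ such that $\hat\varphi$ can be analytically continued along every Lipschitz path $\gamma:[0,1]\to\mathbb{C}$ of length $<L$ with $\gamma(0)=0$ and $\gamma((0,1])\subset\mathbb{C}\setminus F_L$; $\hat{\mathscr{R}}$ denotes the space of such functions. The formal Borel transform $\mathcal{B}:\mathbb{C}[[z^{-1}]]\to\mathbb{C}\delta\oplus\mathbb{C}[[\zeta]]$ sends $\sum_{j\ge0}\varphi_jz^{-j}$ to $\varphi_0\delta+\sum_{j\ge1}\varphi_j\zeta^{j-1}/(j-1)!$; $\tilde{\mathscr{R}}=\mathcal{B}^{-1}(\mathbb{C}\delta\oplus\hat{\mathscr{R}})$ is the space of resurgent series. A discrete filtered set (d.f.s.) is a family $\Omega=(\Omega_L)_{L\ge0}$ of finite subsets of $\mathbb{C}$ with $\Omega_{L_1}\subseteq\Omega_{L_2}$ for $L_1\le L_2$ and $\Omega_\delta=\emptyset$ for some $\delta>0$. Let $\mathcal{S}_\Omega=\{(\lambda,\omega)\in\mathbb{R}\times\mathbb{C}\mid\lambda\ge0,\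 \omega\in\Omega_\lambda\}$ and $\mathcal{M}_\Omega=(\mathbb{R}\times\mathbb{C})\setminus\overline{\mathcal{S}_\Omega}$. Let $\Pi$ be the set of Lipschitz paths $\gamma:[0,t_*]\to\mathbb{C}$ ($t_*\ge0$) with $\gamma(0)=0$; for $t\in[0,t_*]$, $\gamma_{|t}$ denotes the restriction to $[0,t]$ and $L(\cdot)$ denotes length. A path $\gamma\in\Pi$ is $\Omega$-allowed if $(L(\gamma_{|t}),\gamma(t))\in\mathcal{M}_\Omega$ for all $t$. A germ $\hat\varphi\in\mathbb{C}\{\zeta\}$ is $\Omega$-continuable if it can be analytically continued along every $\Omega$-allowed path; $\hat{\mathscr{R}}_\Omega$ is the set of such germs, and $\tilde{\mathscr{R}}_\Omega=\mathcal{B}^{-1}(\mathbb{C}\delta\oplus\hat{\mathscr{R}}_\Omega)$ is the set of $\Omega$-resurgent series. *)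

theory Defs
  imports "HOL-Analysis.Analysis"
begin

(* Convergent power series (germ at 0) are represented by their coefficient
   sequences a :: nat => complex with positive radius of convergence. *)

definition conv_germ :: "(nat \<Rightarrow> complex) \<Rightarrow> bool" where
  "conv_germ a \<longleftrightarrow> conv_radius a > 0"

definition path_len :: "(real \<Rightarrow> complex) \<Rightarrow> real \<Rightarrow> real \<Rightarrow> real" where
  "path_len \<gamma> a b =
     Sup ((\<lambda>ps. \<Sum>i<length ps - 1. norm (\<gamma> (ps ! Suc i) - \<gamma> (ps ! i)))
          ` {ps. sorted ps \<and> set ps \<subseteq> {a..b}})"

definition lipschitz_path :: "(real \<Rightarrow> complex) \<Rightarrow> real \<Rightarrow> bool" where
  "lipschitz_path \<gamma> T \<longleftrightarrow> (\<exists>C. C-lipschitz_on {0..T} \<gamma>)"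

definition cont_along :: "(nat \<Rightarrow> complex) \<Rightarrow> (real \<Rightarrow> complex) \<Rightarrow> real \<Rightarrow> bool" where
  "cont_along a \<gamma> T \<longleftrightarrow>
     (\<exists>(f :: real \<Rightarrow> complex \<Rightarrow> complex) (r :: real \<Rightarrow> real).
        (\<forall>t\<in>{0..T}. r t > 0 \<and> f t holomorphic_on ball (\<gamma> t) (r t)) \<and>
        (\<forall>t\<in>{0..T}. \<exists>e>0. \<forall>s\<in>{0..T}. \<bar>s - t\<bar> < e \<longrightarrow>
            \<gamma> s \<in> ball (\<gamma> t) (r t) \<and>
            (\<forall>z \<in> ball (\<gamma> s) (r s) \<inter> ball (\<gamma> t) (r t). f s z = f t z)) \<and>
        (\<exists>e>0. \<forall>z\<in>ball 0 e. f 0 z = (\<Sum>n. a n * z ^ n)))"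

definition endlessly_continuable :: "(nat \<Rightarrow> complex) \<Rightarrow> bool" where
  "endlessly_continuable a \<longleftrightarrow> conv_germ a \<and>
     (\<forall>L>0. \<exists>F :: complex set. finite F \<and>
        (\<forall>\<gamma>. lipschitz_path \<gamma> 1 \<and> \<gamma> 0 = 0 \<and> path_len \<gamma> 0 1 < L \<and>
              \<gamma> ` {0<..1} \<subseteq> - F \<longrightarrow> cont_along a \<gamma> 1))"

definition dfs :: "(real \<Rightarrow> complex set) \<Rightarrow> bool" where
  "dfs \<Omega> \<longleftrightarrow> (\<forall>L\<ge>0. finite (\<Omega> L)) \<and>
     (\<forall>L1 L2. 0 \<le> L1 \<and> L1 \<le> L2 \<longrightarrow> \<Omega> L1 \<subseteq> \<Omega> L2) \<and>
     (\<exists>\<delta>>0. \<Omega> \<delta> = {})"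

definition S_dfs :: "(real \<Rightarrow> complex set) \<Rightarrow> (real \<times> complex) set" where
  "S_dfs \<Omega> = {(l, w). l \<ge> 0 \<and> w \<in> \<Omega> l}"

definition M_dfs :: "(real \<Rightarrow> complex set) \<Rightarrow> (real \<times> complex) set" where
  "M_dfs \<Omega> = UNIV - closure (S_dfs \<Omega>)"

definition allowed :: "(real \<Rightarrow> complex set) \<Rightarrow> (real \<Rightarrow> complex) \<Rightarrow> real \<Rightarrow> bool" where
  "allowed \<Omega> \<gamma> T \<longleftrightarrow> T \<ge> 0 \<and> lipschitz_path \<gamma> T \<and> \<gamma> 0 = 0 \<and>
     (\<forall>t\<in>{0..T}. (path_len \<gamma> 0 t, \<gamma> t) \<in> M_dfs \<Omega>)"

definition omega_continuable :: "(real \<Rightarrow> complex set) \<Rightarrow> (nat \<Rightarrow> complex) \<Rightarrow> bool" where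
  "omega_continuable \<Omega> a \<longleftrightarrow> conv_germ a \<and>
     (\<forall>\<gamma> T. allowed \<Omega> \<gamma> T \<longrightarrow> cont_along a \<gamma> T)"

(* Formal series \<Sum>_j \<phi> j z^{-j} as coefficient sequences; Borel transform of the
   non-constant part: \<zeta>^n coefficient \<phi>(n+1)/n!  (the \<delta>-part is unconstrained). *)
definition borel :: "(nat \<Rightarrow> complex) \<Rightarrow> (nat \<Rightarrow> complex)" where
  "borel \<phi> = (\<lambda>n. \<phi> (Suc n) / of_nat (fact n))"

definition resurgent :: "(nat \<Rightarrow> complex) \<Rightarrow> bool" where
  "resurgent \<phi> \<longleftrightarrow> endlessly_continuable (borel \<phi>)"

definition omega_resurgent :: "(real \<Rightarrow> complex set) \<Rightarrow> (nat \<Rightarrow> complex) \<Rightarrow> bool" where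
  "omega_resurgent \<Omega> \<phi> \<longleftrightarrow> omega_continuable \<Omega> (borel \<phi>)"

end

theory Submission
  imports Defs "HOL-Complex_Analysis.Complex_Analysis"
begin

text \<open>For an endlessly continuable germ let \<open>\<Omega>\<^sub>l\<close> be the set of points at which analytic
  continuation first breaks down along some Lipschitz path of length at most \<open>l\<close>. Every
  \<open>\<Omega>\<^sub>l\<close> is finite because it lies in each finite set \<open>F\<^sub>L\<close>, \<open>L > l\<close>, from the definition of
  endless continuability: a path ending at a point \<open>\<omega> \<notin> F\<^sub>L\<close> can be sheared to
  \<open>\<gamma>(t) + c t\<close> near its start, with \<open>c\<close> small and outside the negligible set of slopes
  \<open>(w - \<gamma>(t)) / t\<close>, \<open>w \<in> F\<^sub>L\<close>, while its end stays untouched; continuation along the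
  sheared path, which avoids \<open>F\<^sub>L\<close> and is still shorter than \<open>L\<close>, transfers back to the
  original path because continuations along uniformly close paths agree. Moreover \<open>\<Omega>\<^sub>l\<close> is
  empty below the radius of convergence, and an \<open>\<Omega>\<close>-allowed path never meets a first
  obstruction. Conversely, for a discrete filtered set \<open>\<Omega>\<close> a path of length \<open>< L\<close> avoiding
  \<open>\<Omega>\<^sub>L\<close> is \<open>\<Omega>\<close>-allowed, so \<open>F\<^sub>L = \<Omega>\<^sub>L\<close> witnesses endless continuability.\<close>

section \<open>Chains of function elements along a path\<close>

definition germ_sum :: "(nat \<Rightarrow> complex) \<Rightarrow> complex \<Rightarrow> complex" where
  "germ_sum a z = (\<Sum>n. a n * z ^ n)"

definition chain_link ::
    "(real \<Rightarrow> complex) \<Rightarrow> (real \<Rightarrow> complex \<Rightarrow> complex) \<Rightarrow> (real \<Rightarrow> real) \<Rightarrow> real \<Rightarrow> real \<Rightarrow> bool" where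
  "chain_link \<gamma> f r s t \<longleftrightarrow>
     \<gamma> s \<in> ball (\<gamma> t) (r t) \<and> (\<forall>z \<in> ball (\<gamma> s) (r s) \<inter> ball (\<gamma> t) (r t). f s z = f t z)"

text \<open>The body of the definition of \<open>cont_along\<close>, over an arbitrary parameter interval and
  without the initial germ.\<close>

definition cont_chain ::
    "(real \<Rightarrow> complex) \<Rightarrow> real \<Rightarrow> real \<Rightarrow> (real \<Rightarrow> complex \<Rightarrow> complex) \<Rightarrow> (real \<Rightarrow> real) \<Rightarrow> bool" where
  "cont_chain \<gamma> A B f r \<longleftrightarrow>
     (\<forall>t\<in>{A..B}. r t > 0 \<and> f t holomorphic_on ball (\<gamma> t) (r t)) \<and>
     (\<forall>t\<in>{A..B}. \<exists>e>0. \<forall>s\<in>{A..B}. \<bar>s - t\<bar> < e \<longrightarrow> chain_link \<gamma> f r s t)"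

lemma cont_chainI:
  assumes "\<And>t. t \<in> {A..B} \<Longrightarrow> r t > 0"
    and "\<And>t. t \<in> {A..B} \<Longrightarrow> f t holomorphic_on ball (\<gamma> t) (r t)"
    and "\<And>t. t \<in> {A..B} \<Longrightarrow> \<exists>e>0. \<forall>s\<in>{A..B}. \<bar>s - t\<bar> < e \<longrightarrow> chain_link \<gamma> f r s t"
  shows "cont_chain \<gamma> A B f r"
  using assms by (auto simp: cont_chain_def)

lemma cont_chainD:
  assumes "cont_chain \<gamma> A B f r" "t \<in> {A..B}"
  shows "r t > 0" "f t holomorphic_on ball (\<gamma> t) (r t)"
    "\<exists>e>0. \<forall>s\<in>{A..B}. \<bar>s - t\<bar> < e \<longrightarrow> chain_link \<gamma> f r s t"
  using assms by (auto simp: cont_chain_def)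

lemma cont_along_iff_cont_chain:
  "cont_along a \<gamma> T \<longleftrightarrow>
     (\<exists>f r. cont_chain \<gamma> 0 T f r \<and> (\<exists>e>0. \<forall>z\<in>ball 0 e. f 0 z = germ_sum a z))"
  unfolding cont_along_def cont_chain_def chain_link_def germ_sum_def by blast

lemma cont_chain_subinterval:
  assumes chain: "cont_chain \<gamma> A B f r" and "A \<le> A'" "B' \<le> B"
  shows "cont_chain \<gamma> A' B' f r"
proof (rule cont_chainI)
  fix t assume "t \<in> {A'..B'}"
  then have t: "t \<in> {A..B}" using assms by auto
  show "r t > 0" "f t holomorphic_on ball (\<gamma> t) (r t)" using cont_chainD[OF chain t] by auto
  obtain e where "e > 0" "\<forall>s\<in>{A..B}. \<bar>s - t\<bar> < e \<longrightarrow> chain_link \<gamma> f r s t"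
    using cont_chainD(3)[OF chain t] by blast
  then show "\<exists>e>0. \<forall>s\<in>{A'..B'}. \<bar>s - t\<bar> < e \<longrightarrow> chain_link \<gamma> f r s t"
    using assms by (meson atLeastAtMost_iff order_trans)
qed

lemma cont_chain_cong_path:
  assumes "cont_chain \<gamma> A B f r" "\<And>t. t \<in> {A..B} \<Longrightarrow> \<gamma>' t = \<gamma> t"
  shows "cont_chain \<gamma>' A B f r"
  using assms unfolding cont_chain_def chain_link_def by simp

lemma cont_chain_const:
  assumes cont: "continuous_on {A..B} \<gamma>" and S: "S holomorphic_on U"
    and U: "open U" "\<gamma> ` {A..B} \<subseteq> U"
  obtains r where "cont_chain \<gamma> A B (\<lambda>_. S) r"
proof -
  have "\<forall>t\<in>{A..B}. \<exists>\<rho>>0. ball (\<gamma> t) \<rho> \<subseteq> U"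
    using U open_contains_ball by blast
  then obtain r where r: "\<And>t. t \<in> {A..B} \<Longrightarrow> r t > 0 \<and> ball (\<gamma> t) (r t) \<subseteq> U"
    by metis
  have "cont_chain \<gamma> A B (\<lambda>_. S) r"
  proof (rule cont_chainI)
    fix t assume t: "t \<in> {A..B}"
    show "r t > 0" using r[OF t] by blast
    show "S holomorphic_on ball (\<gamma> t) (r t)" using r[OF t] S holomorphic_on_subset by blast
    obtain d where "d > 0" "\<forall>s\<in>{A..B}. dist s t < d \<longrightarrow> dist (\<gamma> s) (\<gamma> t) < r t"
      using cont t r unfolding continuous_on_iff by metis
    then show "\<exists>e>0. \<forall>s\<in>{A..B}. \<bar>s - t\<bar> < e \<longrightarrow> chain_link \<gamma> (\<lambda>_. S) r s t"
      by (auto simp: chain_link_def dist_real_def dist_commute)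
  qed
  then show thesis by (rule that)
qed

lemma holomorphic_eq_on_convex:
  assumes "f holomorphic_on V" "g holomorphic_on V" "open V" "convex V"
    and "open W" "W \<noteq> {}" "W \<subseteq> V" "\<And>z. z \<in> W \<Longrightarrow> f z = g z" "z \<in> V"
  shows "f z = g z"
  using analytic_continuation_open[of W V f g z] assms convex_connected by auto

lemma function_elements_agree_transfer:
  assumes f1: "f1 holomorphic_on ball c1 r1" and g1: "g1 holomorphic_on ball c1 q1"
    and f2: "f2 holomorphic_on ball c2 r2" and g2: "g2 holomorphic_on ball c2 q2"
    and overlap: "ball c1 (min r1 q1) \<inter> ball c2 (min r2 q2) \<noteq> {}"
    and f12: "\<forall>z\<in>ball c1 r1 \<inter> ball c2 r2. f1 z = f2 z"
    and g12: "\<forall>z\<in>ball c1 q1 \<inter> ball c2 q2. g1 z = g2 z"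
    and fg1: "\<forall>z\<in>ball c1 (min r1 q1). f1 z = g1 z"
  shows "\<forall>z\<in>ball c2 (min r2 q2). f2 z = g2 z"
proof
  fix z assume z: "z \<in> ball c2 (min r2 q2)"
  show "f2 z = g2 z"
  proof (rule holomorphic_eq_on_convex[OF _ _ _ _ _ overlap _ _ z])
    show "f2 holomorphic_on ball c2 (min r2 q2)" "g2 holomorphic_on ball c2 (min r2 q2)"
      using f2 g2 by (auto intro: holomorphic_on_subset)
    show "\<And>w. w \<in> ball c1 (min r1 q1) \<inter> ball c2 (min r2 q2) \<Longrightarrow> f2 w = g2 w"
      using f12 g12 fg1 by fastforce
  qed auto
qed

lemma cont_chains_agree_link:
  assumes f: "cont_chain \<gamma> A B f r" and g: "cont_chain \<gamma> A B g q"
    and s: "s \<in> {A..B}" and u: "u \<in> {A..B}"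
    and links: "chain_link \<gamma> f r s u" "chain_link \<gamma> g q s u"
  shows "(\<forall>z\<in>ball (\<gamma> s) (min (r s) (q s)). f s z = g s z) \<longleftrightarrow>
    (\<forall>z\<in>ball (\<gamma> u) (min (r u) (q u)). f u z = g u z)"
proof -
  have "\<gamma> s \<in> ball (\<gamma> s) (min (r s) (q s))"
    using cont_chainD(1)[OF f s] cont_chainD(1)[OF g s] by simp
  moreover have "\<gamma> s \<in> ball (\<gamma> u) (min (r u) (q u))"
    using links by (simp add: chain_link_def)
  ultimately have overlap: "ball (\<gamma> s) (min (r s) (q s)) \<inter> ball (\<gamma> u) (min (r u) (q u)) \<noteq> {}"
    by blast
  have fsu: "\<forall>z\<in>ball (\<gamma> s) (r s) \<inter> ball (\<gamma> u) (r u). f s z = f u z"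
    and gsu: "\<forall>z\<in>ball (\<gamma> s) (q s) \<inter> ball (\<gamma> u) (q u). g s z = g u z"
    using links by (simp_all add: chain_link_def)
  note hol = cont_chainD(2)[OF f s] cont_chainD(2)[OF g s] cont_chainD(2)[OF f u] cont_chainD(2)[OF g u]
  show ?thesis
  proof
    show "\<forall>z\<in>ball (\<gamma> s) (min (r s) (q s)). f s z = g s z \<Longrightarrow>
        \<forall>z\<in>ball (\<gamma> u) (min (r u) (q u)). f u z = g u z"
      by (rule function_elements_agree_transfer[OF hol overlap fsu gsu])
    show "\<forall>z\<in>ball (\<gamma> u) (min (r u) (q u)). f u z = g u z \<Longrightarrow>
        \<forall>z\<in>ball (\<gamma> s) (min (r s) (q s)). f s z = g s z"
      by (rule function_elements_agree_transfer[OF hol(3,4,1,2)])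
        (use overlap fsu gsu in \<open>auto simp: Int_commute\<close>)
  qed
qed

lemma cont_chain_unique:
  assumes f: "cont_chain \<gamma> A B f r" and g: "cont_chain \<gamma> A B g q"
    and start: "e > 0" "\<forall>z\<in>ball (\<gamma> A) e. f A z = g A z"
    and t: "t \<in> {A..B}"
  shows "\<forall>z\<in>ball (\<gamma> t) (min (r t) (q t)). f t z = g t z"
proof -
  define P where "P t \<longleftrightarrow> (\<forall>z\<in>ball (\<gamma> t) (min (r t) (q t)). f t z = g t z)" for t
  have A: "A \<in> {A..B}" using t by auto
  have "P A"
    unfolding P_def
  proof
    fix z assume z: "z \<in> ball (\<gamma> A) (min (r A) (q A))"
    show "f A z = g A z"
    proof (rule holomorphic_eq_on_convex[OF _ _ _ _ _ _ _ _ z])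
      show "f A holomorphic_on ball (\<gamma> A) (min (r A) (q A))"
        "g A holomorphic_on ball (\<gamma> A) (min (r A) (q A))"
        using cont_chainD(2)[OF f A] cont_chainD(2)[OF g A] by (auto intro: holomorphic_on_subset)
      show "ball (\<gamma> A) (min e (min (r A) (q A))) \<noteq> {}"
        using start cont_chainD(1)[OF f A] cont_chainD(1)[OF g A] by simp
    qed (use start in auto)
  qed
  have "P t"
  proof (rule connected_induction_simple[of "{A..B}" A t P])
    fix u assume u: "u \<in> {A..B}"
    obtain e1 where e1: "e1 > 0" "\<forall>s\<in>{A..B}. \<bar>s - u\<bar> < e1 \<longrightarrow> chain_link \<gamma> f r s u"
      using cont_chainD(3)[OF f u] by blast
    obtain e2 where e2: "e2 > 0" "\<forall>s\<in>{A..B}. \<bar>s - u\<bar> < e2 \<longrightarrow> chain_link \<gamma> g q s u"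
      using cont_chainD(3)[OF g u] by blast
    define U where "U = {A..B} \<inter> ball u (min e1 e2)"
    have "P s \<longleftrightarrow> P u" if "s \<in> U" for s
      unfolding P_def using cont_chains_agree_link[OF f g _ u] that e1 e2
      by (auto simp: U_def dist_real_def abs_minus_commute)
    moreover have "openin (top_of_set {A..B}) U" "u \<in> U"
      using u e1 e2 by (auto simp: U_def openin_open_Int)
    ultimately show "\<exists>U. openin (top_of_set {A..B}) U \<and> u \<in> U \<and> (\<forall>x\<in>U. \<forall>y\<in>U. P x \<longrightarrow> P y)"
      by blast
  qed (use t A \<open>P A\<close> in auto)
  then show ?thesis unfolding P_def .
qed

lemma chain_link_cong:
  assumes "f s = f' s" "f t = f' t" "r s = r' s" "r t = r' t"
  shows "chain_link \<gamma> f r s t \<longleftrightarrow> chain_link \<gamma> f' r' s t"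
  using assms by (simp add: chain_link_def)

text \<open>Continuity of \<open>\<gamma>\<close> keeps the neighbouring centres inside the smaller disc.\<close>

lemma cont_chain_update:
  assumes chain: "cont_chain \<gamma> A B f r" and cont: "continuous_on {A..B} \<gamma>" and p: "p \<in> {A..B}"
    and \<rho>: "0 < \<rho>" "\<rho> \<le> r p" and h: "\<forall>z\<in>ball (\<gamma> p) \<rho>. h z = f p z"
  shows "cont_chain \<gamma> A B (f(p := h)) (r(p := \<rho>))"
proof (rule cont_chainI)
  fix t assume t: "t \<in> {A..B}"
  show pos: "(r(p := \<rho>)) t > 0" using cont_chainD(1)[OF chain t] \<rho> by simp
  have "f p holomorphic_on ball (\<gamma> p) \<rho>"
    by (rule holomorphic_on_subset[OF cont_chainD(2)[OF chain p]]) (use \<rho> in auto)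
  then have "h holomorphic_on ball (\<gamma> p) \<rho>"
    using h by (auto intro: holomorphic_transform)
  then show "(f(p := h)) t holomorphic_on ball (\<gamma> t) ((r(p := \<rho>)) t)"
    using cont_chainD(2)[OF chain t] by (cases "t = p") auto
  have shrink: "z \<in> ball (\<gamma> x) (r x) \<and> (f(p := h)) x z = f x z"
    if "z \<in> ball (\<gamma> x) ((r(p := \<rho>)) x)" for x z
    using that \<rho> h by (cases "x = p") auto
  obtain e where e: "e > 0" "\<forall>s\<in>{A..B}. \<bar>s - t\<bar> < e \<longrightarrow> chain_link \<gamma> f r s t"
    using cont_chainD(3)[OF chain t] by blast
  obtain d where d: "d > 0" "\<forall>s\<in>{A..B}. dist s t < d \<longrightarrow> dist (\<gamma> s) (\<gamma> t) < (r(p := \<rho>)) t"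
    using cont t pos unfolding continuous_on_iff by blast
  show "\<exists>e>0. \<forall>s\<in>{A..B}. \<bar>s - t\<bar> < e \<longrightarrow> chain_link \<gamma> (f(p := h)) (r(p := \<rho>)) s t"
  proof (intro exI[of _ "min e d"] conjI ballI impI)
    fix s assume s: "s \<in> {A..B}" "\<bar>s - t\<bar> < min e d"
    then have "chain_link \<gamma> f r s t" "dist (\<gamma> s) (\<gamma> t) < (r(p := \<rho>)) t"
      using e d by (auto simp: dist_real_def)
    then show "chain_link \<gamma> (f(p := h)) (r(p := \<rho>)) s t"
      unfolding chain_link_def using shrink by (metis IntD1 IntD2 IntI dist_commute mem_ball)
  qed (use e d in auto)
qed

lemma cont_chain_join:
  assumes f: "cont_chain \<gamma> A M f r" and g: "cont_chain \<gamma> M B g q" and M: "A \<le> M" "M \<le> B"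
    and at_M: "f M = g M" "r M = q M"
  shows "cont_chain \<gamma> A B (\<lambda>t. if t \<le> M then f t else g t) (\<lambda>t. if t \<le> M then r t else q t)"
    (is "cont_chain \<gamma> A B ?F ?R")
proof (rule cont_chainI)
  have left: "?F t = f t" "?R t = r t" if "t \<le> M" for t using that by simp_all
  have right: "?F t = g t" "?R t = q t" if "M \<le> t" for t using that at_M by auto
  fix t assume t: "t \<in> {A..B}"
  show "?R t > 0" "?F t holomorphic_on ball (\<gamma> t) (?R t)"
    using cont_chainD(1,2)[OF f, of t] cont_chainD(1,2)[OF g, of t] t by (cases "t \<le> M"; simp)+
  obtain e1 where e1: "e1 > 0" "t \<le> M \<Longrightarrow> \<forall>s\<in>{A..M}. \<bar>s - t\<bar> < e1 \<longrightarrow> chain_link \<gamma> f r s t"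
    using cont_chainD(3)[OF f, of t] t by (cases "t \<le> M") (auto intro: zero_less_one)
  obtain e2 where e2: "e2 > 0" "M \<le> t \<Longrightarrow> \<forall>s\<in>{M..B}. \<bar>s - t\<bar> < e2 \<longrightarrow> chain_link \<gamma> g q s t"
    using cont_chainD(3)[OF g, of t] t by (cases "M \<le> t") (auto intro: zero_less_one)
  define e where "e = min (min e1 e2) (if t = M then 1 else \<bar>t - M\<bar>)"
  show "\<exists>e>0. \<forall>s\<in>{A..B}. \<bar>s - t\<bar> < e \<longrightarrow> chain_link \<gamma> ?F ?R s t"
  proof (intro exI[of _ e] conjI ballI impI)
    show "e > 0" using e1 e2 by (simp add: e_def)
    fix s assume s: "s \<in> {A..B}" "\<bar>s - t\<bar> < e"
    have "\<bar>s - t\<bar> < (if t = M then 1 else \<bar>t - M\<bar>)" using s(2) by (simp add: e_def)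
    then have "s \<le> M \<and> t \<le> M \<or> M \<le> s \<and> M \<le> t"
      by (cases t M rule: linorder_cases) (auto split: if_splits)
    then consider "s \<le> M" "t \<le> M" | "M \<le> s" "M \<le> t" by blast
    then show "chain_link \<gamma> ?F ?R s t"
    proof cases
      case 1
      then show ?thesis using e1 s left chain_link_cong[of ?F s f t] by (auto simp: e_def)
    next
      case 2
      then show ?thesis using e2 s right chain_link_cong[of ?F s g t] by (auto simp: e_def)
    qed
  qed
qed

lemma cont_chain_glue:
  assumes f: "cont_chain \<gamma> A M f r" and g: "cont_chain \<gamma> M B g q" and M: "A \<le> M" "M \<le> B"
    and cont: "continuous_on {A..B} \<gamma>" and agree: "\<eta> > 0" "\<forall>z\<in>ball (\<gamma> M) \<eta>. f M z = g M z"
  obtains R where "cont_chain \<gamma> A B (\<lambda>t. if t \<le> M then f t else g t) R"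
proof -
  define m where "m = min (r M) (q M)"
  have M_in: "M \<in> {A..M}" "M \<in> {M..B}" using M by auto
  have m: "0 < m" "m \<le> r M" "m \<le> q M"
    using cont_chainD(1)[OF f M_in(1)] cont_chainD(1)[OF g M_in(2)] by (auto simp: m_def)
  have "\<forall>z\<in>ball (\<gamma> M) m. f M z = g M z"
  proof
    fix z assume z: "z \<in> ball (\<gamma> M) m"
    show "f M z = g M z"
    proof (rule holomorphic_eq_on_convex[OF _ _ _ _ _ _ _ _ z])
      show "f M holomorphic_on ball (\<gamma> M) m" "g M holomorphic_on ball (\<gamma> M) m"
        using cont_chainD(2)[OF f M_in(1)] cont_chainD(2)[OF g M_in(2)] m
        by (auto intro: holomorphic_on_subset)
      show "ball (\<gamma> M) (min \<eta> m) \<noteq> {}" using agree m by simp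
    qed (use agree in auto)
  qed
  then have "cont_chain \<gamma> A M (f(M := f M)) (r(M := m))" "cont_chain \<gamma> M B (g(M := f M)) (q(M := m))"
    using cont_chain_update[OF f _ M_in(1) m(1,2), of "f M"] cont_chain_update[OF g _ M_in(2) m(1,3)]
      continuous_on_subset[OF cont] M by auto
  from cont_chain_join[OF this M] have "cont_chain \<gamma> A B (\<lambda>t. if t \<le> M then f t else g t)
      (\<lambda>t. if t \<le> M then (r(M := m)) t else (q(M := m)) t)"
    by (simp add: if_distrib cong: if_cong)
  then show thesis by (rule that)
qed

lemma cont_chain_rescale:
  assumes chain: "cont_chain (\<lambda>s. \<gamma> (T * s)) 0 1 f r" and T: "T > 0"
  shows "cont_chain \<gamma> 0 T (\<lambda>t. f (t / T)) (\<lambda>t. r (t / T))"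
proof (rule cont_chainI)
  fix t assume "t \<in> {0..T}"
  then have t: "t / T \<in> {0..1}" using T by auto
  show "r (t / T) > 0" "f (t / T) holomorphic_on ball (\<gamma> t) (r (t / T))"
    using cont_chainD(1,2)[OF chain t] T by simp_all
  obtain e where e: "e > 0" "\<forall>s\<in>{0..1}. \<bar>s - t / T\<bar> < e \<longrightarrow> chain_link (\<lambda>s. \<gamma> (T * s)) f r s (t / T)"
    using cont_chainD(3)[OF chain t] by blast
  show "\<exists>e>0. \<forall>s\<in>{0..T}. \<bar>s - t\<bar> < e \<longrightarrow> chain_link \<gamma> (\<lambda>t. f (t / T)) (\<lambda>t. r (t / T)) s t"
  proof (intro exI[of _ "e * T"] conjI ballI impI)
    fix s assume s: "s \<in> {0..T}" "\<bar>s - t\<bar> < e * T"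
    have "\<bar>s / T - t / T\<bar> < e"
      using s T by (simp add: diff_divide_distrib[symmetric] divide_less_eq)
    moreover have "s / T \<in> {0..1}" using s T by auto
    ultimately show "chain_link \<gamma> (\<lambda>t. f (t / T)) (\<lambda>t. r (t / T)) s t"
      using e T by (auto simp: chain_link_def)
  qed (use e T in simp)
qed

lemma compact_local_to_uniform:
  fixes K :: "'a::metric_space set" and Q :: "'a \<Rightarrow> real \<Rightarrow> bool"
  assumes K: "compact K"
    and local: "\<And>t. t \<in> K \<Longrightarrow> \<exists>\<delta>>0. \<exists>\<rho>>0. \<forall>s\<in>K. dist s t < \<delta> \<longrightarrow> Q s \<rho>"
    and mono: "\<And>s \<rho> \<rho>'. Q s \<rho> \<Longrightarrow> 0 < \<rho>' \<Longrightarrow> \<rho>' \<le> \<rho> \<Longrightarrow> Q s \<rho>'"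
  obtains \<rho> where "\<rho> > 0" "\<And>s. s \<in> K \<Longrightarrow> Q s \<rho>"
proof -
  obtain \<delta> \<rho> where \<delta>\<rho>: "\<And>t. t \<in> K \<Longrightarrow> \<delta> t > 0 \<and> \<rho> t > 0 \<and> (\<forall>s\<in>K. dist s t < \<delta> t \<longrightarrow> Q s (\<rho> t))"
    using local by metis
  have "K \<subseteq> (\<Union>t\<in>K. ball t (\<delta> t))"
    using \<delta>\<rho> by force
  then obtain D where D: "D \<subseteq> K" "finite D" "K \<subseteq> (\<Union>t\<in>D. ball t (\<delta> t))"
    using compactE_image[OF K, of K "\<lambda>t. ball t (\<delta> t)"] by blast
  define m where "m = Min (insert 1 (\<rho> ` D))"
  have m: "m > 0" "\<And>t. t \<in> D \<Longrightarrow> m \<le> \<rho> t"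
    using D \<delta>\<rho> by (auto simp: m_def)
  show thesis
  proof (rule that[OF m(1)])
    fix s assume s: "s \<in> K"
    then obtain t where t: "t \<in> D" "s \<in> ball t (\<delta> t)" using D by blast
    then have "Q s (\<rho> t)" using \<delta>\<rho> D s by (auto simp: dist_commute)
    then show "Q s m" using mono m t by blast
  qed
qed

lemma cont_chain_elements_extend:
  assumes chain: "cont_chain \<gamma> A B f r" and cont: "continuous_on {A..B} \<gamma>"
  obtains \<rho> G where "\<rho> > 0" "\<And>t. t \<in> {A..B} \<Longrightarrow> G t holomorphic_on ball (\<gamma> t) \<rho>"
    "\<And>t z. t \<in> {A..B} \<Longrightarrow> z \<in> ball (\<gamma> t) (min \<rho> (r t)) \<Longrightarrow> G t z = f t z"
proof -
  define Q where "Q s \<rho> \<longleftrightarrow>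
      (\<exists>G. G holomorphic_on ball (\<gamma> s) \<rho> \<and> (\<forall>z\<in>ball (\<gamma> s) (min \<rho> (r s)). G z = f s z))" for s \<rho>
  have mono: "Q s \<rho>'" if Q: "Q s \<rho>" and le: "\<rho>' \<le> \<rho>" for s \<rho> \<rho>'
  proof -
    obtain G where G: "G holomorphic_on ball (\<gamma> s) \<rho>" "\<forall>z\<in>ball (\<gamma> s) (min \<rho> (r s)). G z = f s z"
      using Q unfolding Q_def by blast
    have "ball (\<gamma> s) \<rho>' \<subseteq> ball (\<gamma> s) \<rho>" using le by auto
    then show ?thesis
      unfolding Q_def using G le by (intro exI[of _ G]) (auto intro: holomorphic_on_subset)
  qed
  have local: "\<exists>\<delta>>0. \<exists>\<rho>>0. \<forall>s\<in>{A..B}. dist s t < \<delta> \<longrightarrow> Q s \<rho>" if t: "t \<in> {A..B}" for t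
  proof -
    obtain e where e: "e > 0" "\<forall>s\<in>{A..B}. \<bar>s - t\<bar> < e \<longrightarrow> chain_link \<gamma> f r s t"
      using cont_chainD(3)[OF chain t] by blast
    obtain d where d: "d > 0" "\<forall>s\<in>{A..B}. dist s t < d \<longrightarrow> dist (\<gamma> s) (\<gamma> t) < r t / 2"
      using cont t cont_chainD(1)[OF chain t] unfolding continuous_on_iff by (metis half_gt_zero)
    have "Q s (r t / 2)" if s: "s \<in> {A..B}" "dist s t < min e d" for s
    proof -
      have sub: "ball (\<gamma> s) (r t / 2) \<subseteq> ball (\<gamma> t) (r t)"
        using d s by (intro ball_subset_ball_iff[THEN iffD2]) (auto simp: dist_commute)
      have "chain_link \<gamma> f r s t" using e s by (auto simp: dist_real_def)
      then have "\<forall>z\<in>ball (\<gamma> s) (min (r t / 2) (r s)). f t z = f s z"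
        using sub by (auto simp: chain_link_def)
      then show ?thesis
        unfolding Q_def using holomorphic_on_subset[OF cont_chainD(2)[OF chain t] sub] by blast
    qed
    moreover have "min e d > 0" "r t / 2 > 0" using e d cont_chainD(1)[OF chain t] by auto
    ultimately show ?thesis by blast
  qed
  obtain \<rho> where "\<rho> > 0" "\<And>s. s \<in> {A..B} \<Longrightarrow> Q s \<rho>"
    using compact_local_to_uniform[of "{A..B}" Q] local mono by blast
  then show thesis using that unfolding Q_def by metis
qed

lemma cont_chain_of_extensions:
  assumes chain: "cont_chain \<gamma> A B f r" and cont: "continuous_on {A..B} \<gamma>" and \<rho>: "\<rho> > 0"
    and G: "\<And>t. t \<in> {A..B} \<Longrightarrow> G t holomorphic_on ball (\<gamma> t) \<rho>"
    and Gf: "\<And>t z. t \<in> {A..B} \<Longrightarrow> z \<in> ball (\<gamma> t) (min \<rho> (r t)) \<Longrightarrow> G t z = f t z"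
  shows "cont_chain \<gamma> A B G (\<lambda>_. \<rho>)"
proof (rule cont_chainI)
  fix t assume t: "t \<in> {A..B}"
  show "\<rho> > 0" "G t holomorphic_on ball (\<gamma> t) \<rho>" using \<rho> G[OF t] by auto
  obtain e where e: "e > 0" "\<forall>s\<in>{A..B}. \<bar>s - t\<bar> < e \<longrightarrow> chain_link \<gamma> f r s t"
    using cont_chainD(3)[OF chain t] by blast
  obtain d where d: "d > 0" "\<forall>s\<in>{A..B}. dist s t < d \<longrightarrow> dist (\<gamma> s) (\<gamma> t) < \<rho>"
    using cont t \<rho> unfolding continuous_on_iff by metis
  show "\<exists>e>0. \<forall>s\<in>{A..B}. \<bar>s - t\<bar> < e \<longrightarrow> chain_link \<gamma> G (\<lambda>_. \<rho>) s t"
  proof (intro exI[of _ "min e d"] conjI ballI impI)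
    fix s assume s: "s \<in> {A..B}" "\<bar>s - t\<bar> < min e d"
    then have link: "chain_link \<gamma> f r s t" and near: "dist (\<gamma> s) (\<gamma> t) < \<rho>"
      using e d by (auto simp: dist_real_def)
    define W where "W = ball (\<gamma> s) (min \<rho> (r s)) \<inter> ball (\<gamma> t) (min \<rho> (r t))"
    have sW: "\<gamma> s \<in> W"
      using link near \<rho> cont_chainD(1)[OF chain s(1)] by (auto simp: W_def chain_link_def dist_commute)
    have eqW: "G s z = G t z" if "z \<in> W" for z
      using that Gf[OF s(1)] Gf[OF t] link by (auto simp: W_def chain_link_def)
    have "G s z = G t z" if z: "z \<in> ball (\<gamma> s) \<rho> \<inter> ball (\<gamma> t) \<rho>" for z
    proof (intro holomorphic_eq_on_convex[where W = W, OF _ _ _ _ _ _ _ eqW z])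
      show "G s holomorphic_on ball (\<gamma> s) \<rho> \<inter> ball (\<gamma> t) \<rho>"
        "G t holomorphic_on ball (\<gamma> s) \<rho> \<inter> ball (\<gamma> t) \<rho>"
        using G[OF s(1)] G[OF t] by (auto intro: holomorphic_on_subset)
      show "W \<subseteq> ball (\<gamma> s) \<rho> \<inter> ball (\<gamma> t) \<rho>" by (auto simp: W_def)
      show "W \<noteq> {}" using sW by blast
    qed (auto simp: W_def open_Int convex_Int)
    then show "chain_link \<gamma> G (\<lambda>_. \<rho>) s t"
      using near by (simp add: chain_link_def dist_commute)
  qed (use e d in auto)
qed

lemma cont_chain_nearby_path:
  assumes chain: "cont_chain \<gamma> A B f (\<lambda>_. \<rho>)" and cont: "continuous_on {A..B} \<gamma>'"
    and near: "\<forall>t\<in>{A..B}. norm (\<gamma>' t - \<gamma> t) < \<rho> / 2"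
  shows "cont_chain \<gamma>' A B f (\<lambda>_. \<rho> / 2)"
proof (rule cont_chainI)
  have sub: "ball (\<gamma>' t) (\<rho> / 2) \<subseteq> ball (\<gamma> t) \<rho>" if "t \<in> {A..B}" for t
  proof -
    have "dist (\<gamma>' t) (\<gamma> t) < \<rho> / 2" using near that by (simp add: dist_norm)
    then show ?thesis by (subst ball_subset_ball_iff) linarith
  qed
  fix t assume t: "t \<in> {A..B}"
  show "\<rho> / 2 > 0" using cont_chainD(1)[OF chain t] by simp
  show "f t holomorphic_on ball (\<gamma>' t) (\<rho> / 2)"
    using holomorphic_on_subset[OF cont_chainD(2)[OF chain t] sub[OF t]] .
  obtain e where e: "e > 0" "\<forall>s\<in>{A..B}. \<bar>s - t\<bar> < e \<longrightarrow> chain_link \<gamma> f (\<lambda>_. \<rho>) s t"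
    using cont_chainD(3)[OF chain t] by blast
  obtain d where d: "d > 0" "\<forall>s\<in>{A..B}. dist s t < d \<longrightarrow> dist (\<gamma>' s) (\<gamma>' t) < \<rho> / 2"
    using cont t cont_chainD(1)[OF chain t] unfolding continuous_on_iff by (metis half_gt_zero)
  show "\<exists>e>0. \<forall>s\<in>{A..B}. \<bar>s - t\<bar> < e \<longrightarrow> chain_link \<gamma>' f (\<lambda>_. \<rho> / 2) s t"
  proof (intro exI[of _ "min e d"] conjI ballI impI)
    fix s assume s: "s \<in> {A..B}" "\<bar>s - t\<bar> < min e d"
    then have "chain_link \<gamma> f (\<lambda>_. \<rho>) s t" "dist (\<gamma>' s) (\<gamma>' t) < \<rho> / 2"
      using e d by (auto simp: dist_real_def)
    then show "chain_link \<gamma>' f (\<lambda>_. \<rho> / 2) s t"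
      using sub[OF s(1)] sub[OF t] by (auto simp: chain_link_def dist_commute)
  qed (use e d in auto)
qed

lemma cont_chain_transport:
  assumes chain: "cont_chain \<gamma> A B f r" and cont: "continuous_on {A..B} \<gamma>"
  obtains \<rho> G where "\<rho> > 0"
    "\<And>t z. t \<in> {A..B} \<Longrightarrow> z \<in> ball (\<gamma> t) (min \<rho> (r t)) \<Longrightarrow> G t z = f t z"
    "\<And>\<gamma>'. continuous_on {A..B} \<gamma>' \<Longrightarrow> \<forall>t\<in>{A..B}. norm (\<gamma>' t - \<gamma> t) < \<rho> / 2 \<Longrightarrow>
      cont_chain \<gamma>' A B G (\<lambda>_. \<rho> / 2)"
proof -
  obtain \<rho> G where \<rho>: "\<rho> > 0" and G_hol: "\<And>t. t \<in> {A..B} \<Longrightarrow> G t holomorphic_on ball (\<gamma> t) \<rho>"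
    and Gf: "\<And>t z. t \<in> {A..B} \<Longrightarrow> z \<in> ball (\<gamma> t) (min \<rho> (r t)) \<Longrightarrow> G t z = f t z"
    using cont_chain_elements_extend[OF chain cont] by blast
  show thesis
    using that[OF \<rho> Gf] cont_chain_nearby_path[OF cont_chain_of_extensions[OF chain cont \<rho> G_hol Gf]]
    by blast
qed

section \<open>Continuation of a germ\<close>

lemma germ_sum_holomorphic:
  assumes "ereal \<rho> \<le> conv_radius a"
  shows "germ_sum a holomorphic_on ball 0 \<rho>"
  unfolding germ_sum_def
proof (subst holomorphic_on_open[OF open_ball], safe)
  fix z :: complex assume "z \<in> ball 0 \<rho>"
  then have "ereal (norm z) < conv_radius a"
    using assms by (metis dist_0_norm ereal_less(3) less_ereal.simps(1) mem_ball order_less_le_trans)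
  then show "\<exists>f'. ((\<lambda>z. \<Sum>n. a n * z ^ n) has_field_derivative f') (at z)"
    using has_field_derivative_powser by blast
qed

lemma conv_germ_radius:
  assumes "conv_germ a"
  obtains \<rho> where "\<rho> > 0" "ereal \<rho> \<le> conv_radius a"
proof -
  have "0 < conv_radius a" using assms by (simp add: conv_germ_def)
  then obtain \<rho> where "0 < ereal \<rho>" "ereal \<rho> < conv_radius a" using ereal_dense2 by blast
  then show thesis using that[of \<rho>] by auto
qed

lemma cont_along_in_disc:
  assumes \<rho>: "ereal \<rho> \<le> conv_radius a" "0 < \<rho>"
    and cont: "continuous_on {0..T} \<gamma>" and disc: "\<gamma> ` {0..T} \<subseteq> ball 0 \<rho>"
  shows "cont_along a \<gamma> T"
proof -
  obtain r where "cont_chain \<gamma> 0 T (\<lambda>_. germ_sum a) r"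
    using cont_chain_const[OF cont germ_sum_holomorphic[OF \<rho>(1)] open_ball disc] by blast
  then show ?thesis unfolding cont_along_iff_cont_chain using \<rho>(2) by blast
qed

lemma cont_along_0:
  assumes "conv_germ a" "\<gamma> 0 = 0"
  shows "cont_along a \<gamma> 0"
proof -
  obtain \<rho> where "\<rho> > 0" "ereal \<rho> \<le> conv_radius a" using conv_germ_radius assms(1) by blast
  then show ?thesis using assms(2) by (intro cont_along_in_disc) auto
qed

lemma cont_along_rescale:
  assumes "cont_along a (\<lambda>s. \<gamma> (T * s)) 1" "T > 0"
  shows "cont_along a \<gamma> T"
  using assms cont_chain_rescale unfolding cont_along_iff_cont_chain by fastforce

lemma cont_along_append_chain:
  assumes f: "cont_chain \<gamma> 0 M f r" and f0: "e > 0" "\<forall>z\<in>ball 0 e. f 0 z = germ_sum a z"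
    and h: "cont_chain \<gamma> M B h q" and M: "0 \<le> M" "M \<le> B" and cont: "continuous_on {0..B} \<gamma>"
    and agree: "\<eta> > 0" "\<forall>z\<in>ball (\<gamma> M) \<eta>. f M z = h M z"
  shows "cont_along a \<gamma> B"
proof -
  obtain R where "cont_chain \<gamma> 0 B (\<lambda>t. if t \<le> M then f t else h t) R"
    using cont_chain_glue[OF f h M cont agree] by blast
  moreover have "\<forall>z\<in>ball 0 e. (if 0 \<le> M then f 0 else h 0) z = germ_sum a z"
    using f0 M by simp
  ultimately show ?thesis
    unfolding cont_along_iff_cont_chain using f0(1) by blast
qed

lemma cont_along_extend_right:
  assumes ca: "cont_along a \<gamma> \<tau>" and \<tau>: "0 \<le> \<tau>" "\<tau> \<le> T" and cont: "continuous_on {0..T} \<gamma>"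
  obtains \<epsilon> where "\<epsilon> > 0" "\<And>t. \<tau> \<le> t \<Longrightarrow> t \<le> T \<Longrightarrow> t < \<tau> + \<epsilon> \<Longrightarrow> cont_along a \<gamma> t"
proof -
  obtain f r e where chain: "cont_chain \<gamma> 0 \<tau> f r" and germ: "e > 0" "\<forall>z\<in>ball 0 e. f 0 z = germ_sum a z"
    using ca unfolding cont_along_iff_cont_chain by blast
  have "\<tau> \<in> {0..\<tau>}" using \<tau> by auto
  note r\<tau> = cont_chainD(1,2)[OF chain this]
  obtain d where d: "d > 0" "\<forall>s\<in>{0..T}. dist s \<tau> < d \<longrightarrow> dist (\<gamma> s) (\<gamma> \<tau>) < r \<tau>"
    using cont \<tau> r\<tau>(1) unfolding continuous_on_iff by (metis atLeastAtMost_iff)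
  have "cont_along a \<gamma> t" if t: "\<tau> \<le> t" "t \<le> T" "t < \<tau> + d" for t
  proof -
    have cont_t: "continuous_on {0..t} \<gamma>" using cont t by (auto intro: continuous_on_subset)
    have "\<gamma> ` {\<tau>..t} \<subseteq> ball (\<gamma> \<tau>) (r \<tau>)"
      using d t \<tau> by (force simp: dist_real_def dist_commute)
    moreover have "continuous_on {\<tau>..t} \<gamma>" using cont_t \<tau> by (auto intro: continuous_on_subset)
    ultimately obtain q where "cont_chain \<gamma> \<tau> t (\<lambda>_. f \<tau>) q"
      using cont_chain_const[OF _ r\<tau>(2) open_ball] by blast
    then show ?thesis
      using cont_along_append_chain[OF chain germ _ \<tau>(1) t(1) cont_t r\<tau>(1)] by simp
  qed
  then show thesis using that d(1) by blast
qed

lemma cont_along_first_obstruction: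
  assumes cont: "continuous_on {0..T} \<gamma>" and T: "0 \<le> T" and nc: "\<not> cont_along a \<gamma> T"
  obtains \<tau> where "\<tau> \<in> {0..T}" "\<not> cont_along a \<gamma> \<tau>" "\<And>t. 0 \<le> t \<Longrightarrow> t < \<tau> \<Longrightarrow> cont_along a \<gamma> t"
proof -
  define A where "A = {t\<in>{0..T}. \<not> cont_along a \<gamma> t}"
  define \<tau> where "\<tau> = Inf A"
  have TA: "T \<in> A" using nc T by (simp add: A_def)
  have bdd: "bdd_below A" unfolding A_def by (rule bdd_belowI[of _ 0]) auto
  have below: "\<tau> \<le> t" if "t \<in> A" for t unfolding \<tau>_def using that bdd by (rule cInf_lower)
  have \<tau>: "0 \<le> \<tau>" "\<tau> \<le> T"
    using below[OF TA] TA unfolding \<tau>_def by (auto intro: cInf_greatest simp: A_def)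
  have before: "cont_along a \<gamma> t" if "0 \<le> t" "t < \<tau>" for t
    using below[of t] that \<tau> by (force simp: A_def)
  have "\<not> cont_along a \<gamma> \<tau>"
  proof
    assume "cont_along a \<gamma> \<tau>"
    then obtain \<epsilon> where \<epsilon>: "\<epsilon> > 0" "\<And>t. \<tau> \<le> t \<Longrightarrow> t \<le> T \<Longrightarrow> t < \<tau> + \<epsilon> \<Longrightarrow> cont_along a \<gamma> t"
      using cont_along_extend_right[OF _ \<tau> cont] by blast
    have "\<tau> + \<epsilon> \<le> Inf A"
    proof (rule cInf_greatest)
      show "A \<noteq> {}" using TA by blast
      fix t assume "t \<in> A"
      then have "\<tau> \<le> t" "t \<le> T" "\<not> cont_along a \<gamma> t" using below by (auto simp: A_def)
      then show "\<tau> + \<epsilon> \<le> t" using \<epsilon>(2)[of t] by force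
    qed
    then show False using \<epsilon>(1) by (simp add: \<tau>_def)
  qed
  then show thesis using that \<tau> before by auto
qed

text \<open>The continuation along \<open>\<gamma>\<close> up to \<open>M\<close> is transported to the close path \<open>\<gamma>'\<close>, where by
  uniqueness it agrees with the given continuation; at \<open>M\<close> the two paths rejoin and the
  continuations are glued.\<close>

lemma cont_along_via_nearby_path:
  assumes ca: "cont_along a \<gamma> M" and M: "0 \<le> M" "M \<le> B"
    and cont: "continuous_on {0..B} \<gamma>" and \<gamma>0: "\<gamma> 0 = 0"
  obtains \<rho> where "\<rho> > 0"
    "\<And>\<gamma>'. continuous_on {0..B} \<gamma>' \<Longrightarrow> \<gamma>' 0 = 0 \<Longrightarrow> \<forall>t\<in>{0..M}. norm (\<gamma>' t - \<gamma> t) < \<rho> \<Longrightarrow>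
      \<forall>t\<in>{M..B}. \<gamma>' t = \<gamma> t \<Longrightarrow> cont_along a \<gamma>' B \<Longrightarrow> cont_along a \<gamma> B"
proof -
  obtain f r e0 where f: "cont_chain \<gamma> 0 M f r"
    and f0: "e0 > 0" "\<forall>z\<in>ball 0 e0. f 0 z = germ_sum a z"
    using ca unfolding cont_along_iff_cont_chain by blast
  have cont_M: "continuous_on {0..M} \<gamma>" using cont M by (auto intro: continuous_on_subset)
  obtain \<rho> G where \<rho>: "\<rho> > 0"
    and Gf: "\<And>t z. t \<in> {0..M} \<Longrightarrow> z \<in> ball (\<gamma> t) (min \<rho> (r t)) \<Longrightarrow> G t z = f t z"
    and G: "\<And>\<gamma>'. continuous_on {0..M} \<gamma>' \<Longrightarrow> \<forall>t\<in>{0..M}. norm (\<gamma>' t - \<gamma> t) < \<rho> / 2 \<Longrightarrow>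
      cont_chain \<gamma>' 0 M G (\<lambda>_. \<rho> / 2)"
    using cont_chain_transport[OF f cont_M] by blast
  have 0: "0 \<in> {0..M}" and M_in: "M \<in> {0..M}" using M by auto
  have "cont_along a \<gamma> B"
    if cont': "continuous_on {0..B} \<gamma>'" and \<gamma>'0: "\<gamma>' 0 = 0"
      and near: "\<forall>t\<in>{0..M}. norm (\<gamma>' t - \<gamma> t) < \<rho> / 2" and tail: "\<forall>t\<in>{M..B}. \<gamma>' t = \<gamma> t"
      and ca': "cont_along a \<gamma>' B" for \<gamma>'
  proof -
    have G': "cont_chain \<gamma>' 0 M G (\<lambda>_. \<rho> / 2)"
      using G[OF continuous_on_subset[OF cont'] near] M by auto
    obtain h q e1 where h: "cont_chain \<gamma>' 0 B h q"
      and h0: "e1 > 0" "\<forall>z\<in>ball 0 e1. h 0 z = germ_sum a z"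
      using ca' unfolding cont_along_iff_cont_chain by blast
    define e where "e = min e1 (min e0 (min \<rho> (r 0)))"
    have e: "e > 0" using h0 f0 \<rho> cont_chainD(1)[OF f 0] by (simp add: e_def)
    have "\<forall>z\<in>ball (\<gamma>' 0) e. h 0 z = G 0 z"
      using h0 f0 Gf[OF 0] \<gamma>0 \<gamma>'0 by (simp add: e_def)
    then have hG: "\<forall>z\<in>ball (\<gamma> M) (min (q M) (\<rho> / 2)). h M z = G M z"
      using cont_chain_unique[OF cont_chain_subinterval[OF h order_refl M(2)] G' e _ M_in] tail M
      by auto
    define \<eta> where "\<eta> = min (q M) (min (\<rho> / 2) (r M))"
    have \<eta>: "\<eta> > 0"
      using \<rho> cont_chainD(1)[OF h, of M] cont_chainD(1)[OF f M_in] M by (simp add: \<eta>_def)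
    have "f M z = h M z" if "z \<in> ball (\<gamma> M) \<eta>" for z
    proof -
      have "z \<in> ball (\<gamma> M) (min (q M) (\<rho> / 2))" "z \<in> ball (\<gamma> M) (min \<rho> (r M))"
        using that by (auto simp: \<eta>_def) (smt (verit) zero_le_dist)
      then show ?thesis using hG Gf[OF M_in] by auto
    qed
    moreover have "cont_chain \<gamma> M B h q"
      using cont_chain_cong_path[OF cont_chain_subinterval[OF h M(1) order_refl]] tail by auto
    ultimately show ?thesis
      using cont_along_append_chain[OF f f0 _ M cont \<eta>] by blast
  qed
  then show thesis using that[of "\<rho> / 2"] \<rho> by auto
qed

section \<open>Length of Lipschitz paths\<close>

definition polygon_len :: "(real \<Rightarrow> complex) \<Rightarrow> real list \<Rightarrow> real" where
  "polygon_len \<gamma> ps = (\<Sum>i<length ps - 1. norm (\<gamma> (ps ! Suc i) - \<gamma> (ps ! i)))"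

definition partitions :: "real \<Rightarrow> real \<Rightarrow> real list set" where
  "partitions a b = {ps. sorted ps \<and> set ps \<subseteq> {a..b}}"

lemma path_len_eq_Sup_polygon_len: "path_len \<gamma> a b = Sup (polygon_len \<gamma> ` partitions a b)"
  unfolding path_len_def polygon_len_def partitions_def by simp

lemma Nil_in_partitions: "[] \<in> partitions a b"
  by (simp add: partitions_def)

lemma polygon_len_le_lipschitz:
  assumes lip: "C-lipschitz_on {a..b} \<gamma>" and ps: "ps \<in> partitions a b" and ab: "a \<le> b"
  shows "polygon_len \<gamma> ps \<le> C * (b - a)"
proof (cases "ps = []")
  case True
  then show ?thesis using lipschitz_on_nonneg[OF lip] ab by (simp add: polygon_len_def)
next
  case False
  have step: "ps ! i \<le> ps ! Suc i" "ps ! i \<in> {a..b}" "ps ! Suc i \<in> {a..b}" if "i < length ps - 1" for i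
  proof -
    have "ps ! i \<in> set ps" "ps ! Suc i \<in> set ps" using that by (auto intro!: nth_mem)
    then show "ps ! i \<in> {a..b}" "ps ! Suc i \<in> {a..b}" using ps unfolding partitions_def by blast+
    show "ps ! i \<le> ps ! Suc i" using that ps by (simp add: partitions_def sorted_iff_nth_mono)
  qed
  have "polygon_len \<gamma> ps \<le> (\<Sum>i<length ps - 1. C * (ps ! Suc i - ps ! i))"
    unfolding polygon_len_def
  proof (rule sum_mono)
    fix i assume "i \<in> {..<length ps - 1}"
    then have i: "ps ! i \<le> ps ! Suc i" "ps ! i \<in> {a..b}" "ps ! Suc i \<in> {a..b}" using step by auto
    show "norm (\<gamma> (ps ! Suc i) - \<gamma> (ps ! i)) \<le> C * (ps ! Suc i - ps ! i)"
      using lipschitz_onD[OF lip i(3,2)] i(1) by (simp add: dist_norm dist_real_def)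
  qed
  also have "\<dots> = C * (ps ! (length ps - 1) - ps ! 0)"
    by (simp add: sum_distrib_left[symmetric] sum_lessThan_telescope)
  also have "\<dots> \<le> C * (b - a)"
  proof -
    have "ps ! (length ps - 1) \<in> set ps" "ps ! 0 \<in> set ps" using False by (auto intro!: nth_mem)
    then have "ps ! (length ps - 1) \<le> b" "a \<le> ps ! 0" using ps by (auto simp: partitions_def)
    then show ?thesis using lipschitz_on_nonneg[OF lip] by (intro mult_left_mono) auto
  qed
  finally show ?thesis .
qed

lemma polygon_len_le_path_len:
  assumes "C-lipschitz_on {a..b} \<gamma>" "ps \<in> partitions a b" "a \<le> b"
  shows "polygon_len \<gamma> ps \<le> path_len \<gamma> a b"
  unfolding path_len_eq_Sup_polygon_len using assms polygon_len_le_lipschitz[OF assms(1)]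
  by (intro cSup_upper) (auto intro!: bdd_aboveI)

lemma path_len_le:
  assumes "\<And>ps. ps \<in> partitions a b \<Longrightarrow> polygon_len \<gamma> ps \<le> B"
  shows "path_len \<gamma> a b \<le> B"
  unfolding path_len_eq_Sup_polygon_len using assms Nil_in_partitions by (auto intro!: cSup_least)

lemma path_len_nonneg:
  assumes "C-lipschitz_on {a..b} \<gamma>" "a \<le> b"
  shows "0 \<le> path_len \<gamma> a b"
  using polygon_len_le_path_len[OF assms(1) Nil_in_partitions assms(2)] by (simp add: polygon_len_def)

lemma path_len_refl: "path_len \<gamma> a a = 0"
proof -
  have "polygon_len \<gamma> ps = 0" if "ps \<in> partitions a a" for ps
  proof -
    have "ps ! i = a" if "i < length ps" for i
      using nth_mem[OF that] \<open>ps \<in> partitions a a\<close> by (auto simp: partitions_def)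
    then show ?thesis by (simp add: polygon_len_def)
  qed
  moreover have "0 \<in> polygon_len \<gamma> ` partitions a a"
    by (rule image_eqI[OF _ Nil_in_partitions]) (simp add: polygon_len_def)
  ultimately have "polygon_len \<gamma> ` partitions a a = {0}" by auto
  then show ?thesis by (simp add: path_len_eq_Sup_polygon_len)
qed

lemma path_len_mono:
  assumes "C-lipschitz_on {a..b} \<gamma>" "a \<le> t" "t \<le> b"
  shows "path_len \<gamma> a t \<le> path_len \<gamma> a b"
  using assms polygon_len_le_path_len by (intro path_len_le) (force simp: partitions_def)

lemma norm_le_path_len:
  assumes "C-lipschitz_on {a..b} \<gamma>" "a \<le> t" "t \<le> b"
  shows "norm (\<gamma> t - \<gamma> a) \<le> path_len \<gamma> a b"
proof -
  have "[a, t] \<in> partitions a b" using assms by (auto simp: partitions_def)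
  then show ?thesis
    using polygon_len_le_path_len[OF assms(1)] assms(2,3) by (fastforce simp: polygon_len_def)
qed

lemma path_len_add_le:
  assumes \<gamma>: "C-lipschitz_on {a..b} \<gamma>" and \<eta>: "D-lipschitz_on {a..b} \<eta>" and ab: "a \<le> b"
  shows "path_len (\<lambda>t. \<gamma> t + \<eta> t) a b \<le> path_len \<gamma> a b + D * (b - a)"
proof (rule path_len_le)
  fix ps assume ps: "ps \<in> partitions a b"
  have "polygon_len (\<lambda>t. \<gamma> t + \<eta> t) ps \<le> polygon_len \<gamma> ps + polygon_len \<eta> ps"
    unfolding polygon_len_def sum.distrib[symmetric]
    by (intro sum_mono) (metis add_diff_add norm_triangle_ineq)
  also have "\<dots> \<le> path_len \<gamma> a b + D * (b - a)"
    using polygon_len_le_path_len[OF \<gamma> ps ab] polygon_len_le_lipschitz[OF \<eta> ps ab] by simp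
  finally show "polygon_len (\<lambda>t. \<gamma> t + \<eta> t) ps \<le> path_len \<gamma> a b + D * (b - a)" .
qed

lemma path_len_rescale_le:
  assumes lip: "C-lipschitz_on {0..T} \<gamma>" and T: "0 < T"
  shows "path_len (\<lambda>s. \<gamma> (T * s)) 0 1 \<le> path_len \<gamma> 0 T"
proof (rule path_len_le)
  fix ps assume ps: "ps \<in> partitions 0 1"
  have "map ((*) T) ps \<in> partitions 0 T"
    using ps T unfolding partitions_def
    by (auto simp: sorted_map intro!: sorted_wrt_mono_rel[of _ "(\<le>)"] mult_left_mono)
  moreover have "polygon_len (\<lambda>s. \<gamma> (T * s)) ps = polygon_len \<gamma> (map ((*) T) ps)"
    by (simp add: polygon_len_def)
  ultimately show "polygon_len (\<lambda>s. \<gamma> (T * s)) ps \<le> path_len \<gamma> 0 T"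
    using polygon_len_le_path_len[OF lip] T by auto
qed

section \<open>Perturbing a path off a finite set\<close>

lemma norm_slope_diff_le:
  fixes \<gamma> :: "real \<Rightarrow> complex"
  assumes lip: "C-lipschitz_on {0..T} \<gamma>" and st: "0 < t" "t \<le> T" "0 < s" "s \<le> T" "t / 2 < s"
  shows "norm ((w - \<gamma> s) / of_real s - (w - \<gamma> t) / of_real t) \<le> 2 * (norm (w - \<gamma> t) + t * C) / t^2 * \<bar>s - t\<bar>"
proof -
  have C: "C \<ge> 0" using lip by (simp add: lipschitz_on_def)
  have L: "norm (\<gamma> t - \<gamma> s) \<le> C * \<bar>s - t\<bar>"
  proof -
    have "t \<in> {0..T}" "s \<in> {0..T}" using st by auto
    then have "dist (\<gamma> t) (\<gamma> s) \<le> C * dist t s" using lip by (simp add: lipschitz_on_def)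
    then show ?thesis by (simp add: dist_norm dist_real_def abs_minus_commute)
  qed
  have eq: "(w - \<gamma> s) / of_real s - (w - \<gamma> t) / of_real t
      = ((w - \<gamma> t) * of_real (t - s) + of_real t * (\<gamma> t - \<gamma> s)) / of_real (s * t)"
    using st by (simp add: field_simps)
  define N where "N = norm (w - \<gamma> t) + t * C"
  have N: "N \<ge> 0" using C st by (simp add: N_def)
  have "norm ((w - \<gamma> t) * of_real (t - s) + of_real t * (\<gamma> t - \<gamma> s))
        \<le> norm (w - \<gamma> t) * \<bar>s - t\<bar> + t * (C * \<bar>s - t\<bar>)"
  proof -
    have "norm ((w - \<gamma> t) * of_real (t - s) + of_real t * (\<gamma> t - \<gamma> s))
        \<le> norm ((w - \<gamma> t) * of_real (t - s)) + norm (of_real t * (\<gamma> t - \<gamma> s))"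
      by (rule norm_triangle_ineq)
    also have "\<dots> = norm (w - \<gamma> t) * \<bar>s - t\<bar> + t * norm (\<gamma> t - \<gamma> s)"
      using st by (simp add: norm_mult abs_minus_commute flip: of_real_diff)
    also have "\<dots> \<le> norm (w - \<gamma> t) * \<bar>s - t\<bar> + t * (C * \<bar>s - t\<bar>)"
      using L st by (intro add_left_mono mult_left_mono) auto
    finally show ?thesis .
  qed
  also have "\<dots> = N * \<bar>s - t\<bar>" by (simp add: N_def algebra_simps)
  finally have num: "norm ((w - \<gamma> t) * of_real (t - s) + of_real t * (\<gamma> t - \<gamma> s)) \<le> N * \<bar>s - t\<bar>" .
  have "norm ((w - \<gamma> s) / of_real s - (w - \<gamma> t) / of_real t)
      = norm ((w - \<gamma> t) * of_real (t - s) + of_real t * (\<gamma> t - \<gamma> s)) / (s * t)"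
  proof -
    have "norm (complex_of_real (s * t)) = s * t" using st by (simp only: norm_of_real abs_of_pos mult_pos_pos)
    then show ?thesis unfolding eq norm_divide by simp
  qed
  also have "\<dots> \<le> N * \<bar>s - t\<bar> / (s * t)"
    using num st by (intro divide_right_mono) auto
  also have "\<dots> \<le> N * \<bar>s - t\<bar> / (t ^ 2 / 2)"
    using st N by (intro divide_left_mono) (auto simp: power2_eq_square intro: mult_right_mono)
  also have "\<dots> = 2 * N / t^2 * \<bar>s - t\<bar>" by (simp add: field_simps)
  finally show ?thesis by (simp add: N_def)
qed

lemma negligible_slope_image:
  fixes \<gamma> :: "real \<Rightarrow> complex"
  assumes lip: "C-lipschitz_on {0..T} \<gamma>"
  shows "negligible ((\<lambda>t. (w - \<gamma> t) / of_real t) ` {0<..T})"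
proof -
  define g where "g x = (w - \<gamma> (Re x)) / of_real (Re x)" for x :: complex
  define S where "S = (of_real ` {0<..T} :: complex set)"
  have "negligible S"
  proof (rule negligible_subset[OF negligible_hyperplane[of \<i> 0]])
    show "S \<subseteq> {x. \<i> \<bullet> x = 0}" by (auto simp: S_def inner_complex_def)
  qed simp
  then have "negligible (g ` S)"
  proof (rule negligible_locally_Lipschitz_image[OF order_refl])
    fix x assume "x \<in> S"
    then obtain t where t: "t \<in> {0<..T}" "x = of_real t" by (auto simp: S_def)
    show "\<exists>U B. open U \<and> x \<in> U \<and> (\<forall>y\<in>S \<inter> U. norm (g y - g x) \<le> B * norm (y - x))"
    proof (intro exI conjI ballI)
      show "open {y. Re y > t / 2}" by (rule open_halfspace_Re_gt)
      show "x \<in> {y. Re y > t / 2}" using t by simp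
      fix y assume "y \<in> S \<inter> {y. Re y > t / 2}"
      then obtain s where s: "s \<in> {0<..T}" "y = of_real s" "s > t / 2" by (auto simp: S_def)
      have "norm (g y - g x) \<le> 2 * (norm (w - \<gamma> t) + t * C) / t^2 * \<bar>s - t\<bar>"
        using norm_slope_diff_le[OF lip, of t s w] t s by (simp add: g_def)
      also have "\<bar>s - t\<bar> = norm (y - x)" using s t by (simp flip: of_real_diff)
      finally show "norm (g y - g x) \<le> 2 * (norm (w - \<gamma> t) + t * C) / t^2 * norm (y - x)" .
    qed
  qed
  moreover have "g ` S = (\<lambda>t. (w - \<gamma> t) / of_real t) ` {0<..T}"
    by (auto simp: S_def g_def image_image)
  ultimately show ?thesis by simp
qed

lemma exists_small_shear_avoiding:
  fixes \<gamma> :: "real \<Rightarrow> complex"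
  assumes lip: "C-lipschitz_on {0..T} \<gamma>" and F: "finite F" and \<epsilon>: "\<epsilon> > 0"
  obtains c where "norm c < \<epsilon>" "\<forall>t\<in>{0<..T}. \<forall>w\<in>F. \<gamma> t + c * of_real t \<noteq> w"
proof -
  define Bad where "Bad = (\<Union>w\<in>F. (\<lambda>t. (w - \<gamma> t) / of_real t) ` {0<..T})"
  have "negligible Bad"
    unfolding Bad_def using F negligible_slope_image[OF lip] by (intro negligible_Union) auto
  moreover have "\<not> negligible (ball (0::complex) \<epsilon>)" using \<epsilon> by (intro open_not_negligible) auto
  ultimately obtain c where c: "c \<in> ball 0 \<epsilon>" "c \<notin> Bad" using negligible_subset by blast
  have "\<gamma> t + c * of_real t \<noteq> w" if "t \<in> {0<..T}" "w \<in> F" for t w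
  proof
    assume "\<gamma> t + c * of_real t = w"
    then have "c = (w - \<gamma> t) / of_real t" using that by (auto simp: field_simps)
    then show False using c that unfolding Bad_def by blast
  qed
  then show thesis using that c by auto
qed

lemma tent_cutoff:
  assumes T: "0 < T1" "T1 < T2"
  obtains \<phi> :: "real \<Rightarrow> real" and K where "K-lipschitz_on UNIV \<phi>"
    "\<And>t. 0 \<le> t \<Longrightarrow> t \<le> T1 \<Longrightarrow> \<phi> t = t" "\<And>t. T2 \<le> t \<Longrightarrow> \<phi> t = 0"
    "\<And>t. 0 \<le> \<phi> t \<and> \<phi> t \<le> T1"
proof -
  define k where "k = T1 / (T2 - T1)"
  have k: "k \<ge> 0" "k * (T2 - T1) = T1" using T by (simp_all add: k_def)
  define \<phi> where "\<phi> t = max 0 (min t (k * (T2 - t)))" for t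
  have "\<bar>\<phi> x - \<phi> y\<bar> \<le> max 1 k * \<bar>x - y\<bar>" for x y
  proof -
    have "\<bar>\<phi> x - \<phi> y\<bar> \<le> max \<bar>x - y\<bar> \<bar>k * (T2 - x) - k * (T2 - y)\<bar>"
      unfolding \<phi>_def by (simp add: max_def min_def abs_if)
    also have "\<bar>k * (T2 - x) - k * (T2 - y)\<bar> = k * \<bar>x - y\<bar>"
      using k by (simp add: right_diff_distrib[symmetric] abs_mult abs_minus_commute)
    finally show ?thesis by (simp add: max_mult_distrib_right)
  qed
  then have "(max 1 k)-lipschitz_on UNIV \<phi>"
    by (intro lipschitz_onI) (auto simp: dist_real_def)
  moreover have "\<phi> t = t" if "0 \<le> t" "t \<le> T1" for t
  proof -
    have "k * (T2 - t) \<ge> k * (T2 - T1)" using that k by (intro mult_left_mono) auto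
    then show ?thesis using that k by (simp add: \<phi>_def)
  qed
  moreover have "\<phi> t = 0" if "T2 \<le> t" for t
  proof -
    have "k * (T2 - t) \<le> 0" using that k by (simp add: mult_nonneg_nonpos)
    then show ?thesis by (simp add: \<phi>_def)
  qed
  moreover have "0 \<le> \<phi> t \<and> \<phi> t \<le> T1" for t
  proof -
    have "k * (T2 - t) \<le> T1" if "T1 \<le> t"
    proof -
      have "k * (T2 - t) \<le> k * (T2 - T1)" using that k by (intro mult_left_mono) auto
      then show ?thesis using k by simp
    qed
    then show ?thesis using T by (simp add: \<phi>_def min_le_iff_disj) linarith
  qed
  ultimately show thesis using that by blast
qed

lemma tail_avoids_finite:
  fixes \<gamma> :: "real \<Rightarrow> complex"
  assumes cont: "continuous_on {0..T} \<gamma>" and T: "0 < T" and F: "finite F" and end_F: "\<gamma> T \<notin> F"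
  obtains T1 d where "0 < T1" "T1 < T" "d > 0" "\<forall>t\<in>{T1..T}. \<forall>w\<in>F. d \<le> dist (\<gamma> t) w"
proof -
  obtain d where d: "d > 0" "\<forall>w\<in>F. w \<noteq> \<gamma> T \<longrightarrow> d \<le> dist (\<gamma> T) w"
    using finite_set_avoid[OF F] by blast
  obtain \<eta> where \<eta>: "\<eta> > 0" "\<forall>s\<in>{0..T}. dist s T < \<eta> \<longrightarrow> dist (\<gamma> s) (\<gamma> T) < d / 2"
    using cont T d unfolding continuous_on_iff by (metis atLeastAtMost_iff half_gt_zero less_eq_real_def)
  define T1 where "T1 = T - min \<eta> T / 2"
  have "d / 2 \<le> dist (\<gamma> t) w" if "t \<in> {T1..T}" "w \<in> F" for t w
  proof -
    have "dist (\<gamma> t) (\<gamma> T) < d / 2" using \<eta> that T by (auto simp: T1_def dist_real_def)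
    moreover have "w \<noteq> \<gamma> T" using that(2) end_F by blast
    then have "d \<le> dist (\<gamma> T) w" using d that(2) by blast
    ultimately show ?thesis using dist_triangle[of "\<gamma> T" w "\<gamma> t"] by (simp add: dist_commute)
  qed
  moreover have "0 < T1" "T1 < T" using \<eta> T by (auto simp: T1_def)
  ultimately show thesis using that[of T1 "d / 2"] d by auto
qed

lemma perturbation_lipschitz:
  fixes \<gamma> :: "real \<Rightarrow> complex" and \<phi> :: "real \<Rightarrow> real"
  assumes lip: "C-lipschitz_on {0..T} \<gamma>" and \<phi>: "K-lipschitz_on UNIV \<phi>" and T: "0 \<le> T"
  shows "(C + norm c * K)-lipschitz_on {0..T} (\<lambda>t. \<gamma> t + c * of_real (\<phi> t))"
    and "path_len (\<lambda>t. \<gamma> t + c * of_real (\<phi> t)) 0 T \<le> path_len \<gamma> 0 T + norm c * K * T"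
proof -
  have "(norm c * K)-lipschitz_on {0..T} (\<lambda>t. c * of_real (\<phi> t))"
  proof (rule lipschitz_onI)
    fix x y
    have "dist (c * of_real (\<phi> x)) (c * of_real (\<phi> y)) = norm c * dist (\<phi> x) (\<phi> y)"
      by (simp add: dist_norm norm_mult dist_real_def flip: right_diff_distrib of_real_diff)
    also have "\<dots> \<le> norm c * (K * dist x y)"
      using lipschitz_onD[OF \<phi>] by (intro mult_left_mono) auto
    finally show "dist (c * of_real (\<phi> x)) (c * of_real (\<phi> y)) \<le> norm c * K * dist x y"
      by (simp add: mult.assoc)
  qed (use lipschitz_on_nonneg[OF \<phi>] in simp)
  then show "(C + norm c * K)-lipschitz_on {0..T} (\<lambda>t. \<gamma> t + c * of_real (\<phi> t))"
    and "path_len (\<lambda>t. \<gamma> t + c * of_real (\<phi> t)) 0 T \<le> path_len \<gamma> 0 T + norm c * K * T"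
    using lipschitz_on_add[OF lip] path_len_add_le[OF lip _ T] by auto
qed

text \<open>The perturbation is \<open>\<gamma> t + c \<phi> t\<close> with \<open>\<phi>\<close> a tent cut-off: on \<open>(0, T\<^sub>1]\<close> it is a shear
  \<open>\<gamma> t + c t\<close> missing \<open>F\<close>, near the end it leaves \<open>\<gamma>\<close> unchanged, and in between \<open>\<gamma>\<close> stays away
  from \<open>F\<close> anyway.\<close>

lemma lipschitz_path_perturb_avoiding:
  fixes \<gamma> :: "real \<Rightarrow> complex"
  assumes lip: "C-lipschitz_on {0..T} \<gamma>" and T: "0 < T1" "T1 < T2" "T2 \<le> T"
    and F: "finite F" and far: "d > 0" "\<forall>t\<in>{T1..T}. \<forall>w\<in>F. d \<le> dist (\<gamma> t) w"
    and \<rho>: "\<rho> > 0" and \<epsilon>: "\<epsilon> > 0"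
  obtains \<gamma>' C' where "C'-lipschitz_on {0..T} \<gamma>'" "\<gamma>' 0 = \<gamma> 0" "\<forall>t\<in>{T2..T}. \<gamma>' t = \<gamma> t"
    "\<forall>t\<in>{0..T}. norm (\<gamma>' t - \<gamma> t) < \<rho>" "path_len \<gamma>' 0 T < path_len \<gamma> 0 T + \<epsilon>"
    "\<forall>t\<in>{0<..T}. \<gamma>' t \<notin> F"
proof -
  obtain K and \<phi> :: "real \<Rightarrow> real" where \<phi>: "K-lipschitz_on UNIV \<phi>"
    "\<And>t. 0 \<le> t \<Longrightarrow> t \<le> T1 \<Longrightarrow> \<phi> t = t" "\<And>t. T2 \<le> t \<Longrightarrow> \<phi> t = 0" "\<And>t. 0 \<le> \<phi> t \<and> \<phi> t \<le> T1"
    by (rule tent_cutoff[OF T(1,2)]) blast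
  have K: "K \<ge> 0" using lipschitz_on_nonneg[OF \<phi>(1)] .
  define N where "N = K * T + T + 1"
  have KT: "K * T \<ge> 0" using K T by simp
  have N: "N > 0" "T \<le> N" "K * T \<le> N" unfolding N_def using KT T by linarith+
  have "min \<rho> (min d \<epsilon>) / N > 0" using \<rho> far \<epsilon> N by simp
  moreover have "C-lipschitz_on {0..T1} \<gamma>" using lipschitz_on_subset[OF lip] T by auto
  ultimately obtain c where c: "norm c < min \<rho> (min d \<epsilon>) / N"
    and shear: "\<forall>t\<in>{0<..T1}. \<forall>w\<in>F. \<gamma> t + c * of_real t \<noteq> w"
    using exists_small_shear_avoiding F by metis
  have cN: "norm c * N < min \<rho> (min d \<epsilon>)" using c N by (simp add: pos_less_divide_eq)
  have small: "norm c * T < \<rho>" "norm c * T < d" "norm c * (K * T) < \<epsilon>"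
    using cN mult_left_mono[OF N(2) norm_ge_zero, of c] mult_left_mono[OF N(3) norm_ge_zero, of c] by auto
  define \<gamma>' where "\<gamma>' t = \<gamma> t + c * of_real (\<phi> t)" for t
  have lip': "(C + norm c * K)-lipschitz_on {0..T} \<gamma>'"
    and len: "path_len \<gamma>' 0 T \<le> path_len \<gamma> 0 T + norm c * K * T"
    using perturbation_lipschitz[OF lip \<phi>(1)] T unfolding \<gamma>'_def by auto
  have close: "norm (\<gamma>' t - \<gamma> t) < \<rho>" "norm (\<gamma>' t - \<gamma> t) < d" for t
  proof -
    have "norm (\<gamma>' t - \<gamma> t) = norm c * \<phi> t" using \<phi>(4)[of t] by (simp add: \<gamma>'_def norm_mult)
    also have "\<dots> \<le> norm c * T" using \<phi>(4)[of t] T by (intro mult_left_mono) auto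
    finally show "norm (\<gamma>' t - \<gamma> t) < \<rho>" "norm (\<gamma>' t - \<gamma> t) < d" using small by auto
  qed
  have "\<gamma>' t \<notin> F" if t: "t \<in> {0<..T}" for t
  proof (cases "t \<le> T1")
    case True
    then show ?thesis using shear \<phi>(2)[of t] t by (auto simp: \<gamma>'_def)
  next
    case False
    show ?thesis
    proof
      assume "\<gamma>' t \<in> F"
      then have "d \<le> dist (\<gamma> t) (\<gamma>' t)" using far(2) t False by auto
      then show False using close(2)[of t] by (simp add: dist_norm norm_minus_commute)
    qed
  qed
  moreover have "\<gamma>' 0 = \<gamma> 0" "\<forall>t\<in>{T2..T}. \<gamma>' t = \<gamma> t" using \<phi>(2,3) T by (auto simp: \<gamma>'_def)
  ultimately show thesis
    using that[OF lip'] close(1) len small(3) by (auto simp: mult.assoc)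
qed

section \<open>The singular filtration\<close>

lemma cont_along_rescaled_avoiding:
  assumes cont_F: "\<forall>\<gamma>. lipschitz_path \<gamma> 1 \<and> \<gamma> 0 = 0 \<and> path_len \<gamma> 0 1 < L \<and> \<gamma> ` {0<..1} \<subseteq> - F
      \<longrightarrow> cont_along a \<gamma> 1"
    and lip: "C-lipschitz_on {0..T} \<gamma>" and T: "T > 0"
    and \<gamma>0: "\<gamma> 0 = 0" and len: "path_len \<gamma> 0 T < L" and avoid: "\<forall>t\<in>{0<..T}. \<gamma> t \<notin> F"
  shows "cont_along a \<gamma> T"
proof -
  have "(T * 1)-lipschitz_on {0..1} (\<lambda>s. T * s)"
    using lipschitz_on_cmult_real_nonneg[OF lipschitz_on_id, of T] T by simp
  moreover have "(\<lambda>s. T * s) ` {0..1} \<subseteq> {0..T}" using T by (auto simp: mult_le_cancel_left1)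
  ultimately have "lipschitz_path (\<lambda>s. \<gamma> (T * s)) 1"
    unfolding lipschitz_path_def using lipschitz_on_compose2 lipschitz_on_subset[OF lip] by blast
  moreover have "path_len (\<lambda>s. \<gamma> (T * s)) 0 1 < L"
    using path_len_rescale_le[OF lip T] len by linarith
  moreover have "(\<lambda>s. \<gamma> (T * s)) ` {0<..1} \<subseteq> - F"
    using avoid T by (auto simp: mult_le_cancel_left1)
  ultimately have "cont_along a (\<lambda>s. \<gamma> (T * s)) 1" using cont_F \<gamma>0 by simp
  then show ?thesis using cont_along_rescale T by blast
qed

definition singular_endpoint :: "(nat \<Rightarrow> complex) \<Rightarrow> real \<Rightarrow> complex \<Rightarrow> bool" where
  "singular_endpoint a l \<omega> \<longleftrightarrow> (\<exists>\<gamma> T C. C-lipschitz_on {0..T} \<gamma> \<and> 0 \<le> T \<and> \<gamma> 0 = 0 \<and> \<gamma> T = \<omega> \<and>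
      path_len \<gamma> 0 T \<le> l \<and> (\<forall>t\<in>{0..<T}. cont_along a \<gamma> t) \<and> \<not> cont_along a \<gamma> T)"

definition singular_filtration :: "(nat \<Rightarrow> complex) \<Rightarrow> real \<Rightarrow> complex set" where
  "singular_filtration a l = {\<omega>. singular_endpoint a l \<omega>}"

text \<open>Otherwise a perturbation of the path that avoids \<open>F\<close> would carry the continuation past
  \<open>\<omega>\<close>.\<close>

lemma singular_endpoint_mem:
  assumes germ: "conv_germ a" and F: "finite F"
    and cont_F: "\<forall>\<gamma>. lipschitz_path \<gamma> 1 \<and> \<gamma> 0 = 0 \<and> path_len \<gamma> 0 1 < L \<and> \<gamma> ` {0<..1} \<subseteq> - F
      \<longrightarrow> cont_along a \<gamma> 1"
    and sing: "singular_endpoint a l \<omega>" and lL: "l < L"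
  shows "\<omega> \<in> F"
proof (rule ccontr)
  assume \<omega>: "\<omega> \<notin> F"
  obtain \<gamma> T C where lip: "C-lipschitz_on {0..T} \<gamma>" and T0: "0 \<le> T" and \<gamma>0: "\<gamma> 0 = 0"
    and \<gamma>T: "\<gamma> T = \<omega>" and len: "path_len \<gamma> 0 T \<le> l"
    and before: "\<forall>t\<in>{0..<T}. cont_along a \<gamma> t" and nc: "\<not> cont_along a \<gamma> T"
    using sing unfolding singular_endpoint_def by blast
  have T: "T > 0" using nc cont_along_0[of a \<gamma>, OF germ \<gamma>0] T0 by (cases "T = 0") auto
  have cont: "continuous_on {0..T} \<gamma>" using lip by (rule lipschitz_on_continuous_on)
  obtain T1 d where T1: "0 < T1" "T1 < T" and far: "d > 0" "\<forall>t\<in>{T1..T}. \<forall>w\<in>F. d \<le> dist (\<gamma> t) w"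
    by (rule tail_avoids_finite[OF cont T F \<omega>[folded \<gamma>T]]) blast
  define T2 where "T2 = (T1 + T) / 2"
  have T2: "T1 < T2" "T2 < T" using T1 by (auto simp: T2_def)
  then have "cont_along a \<gamma> T2" using before T1 by auto
  moreover have "0 \<le> T2" "T2 \<le> T" using T1 T2 by auto
  ultimately obtain \<rho> where \<rho>: "\<rho> > 0" and transfer: "\<And>\<gamma>'. continuous_on {0..T} \<gamma>' \<Longrightarrow> \<gamma>' 0 = 0 \<Longrightarrow>
      \<forall>t\<in>{0..T2}. norm (\<gamma>' t - \<gamma> t) < \<rho> \<Longrightarrow> \<forall>t\<in>{T2..T}. \<gamma>' t = \<gamma> t \<Longrightarrow>
      cont_along a \<gamma>' T \<Longrightarrow> cont_along a \<gamma> T"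
    using cont_along_via_nearby_path[OF _ _ _ cont \<gamma>0] by blast
  obtain \<gamma>' C' where lip': "C'-lipschitz_on {0..T} \<gamma>'" and \<gamma>'0: "\<gamma>' 0 = \<gamma> 0"
    and tail: "\<forall>t\<in>{T2..T}. \<gamma>' t = \<gamma> t" and near: "\<forall>t\<in>{0..T}. norm (\<gamma>' t - \<gamma> t) < \<rho>"
    and len': "path_len \<gamma>' 0 T < path_len \<gamma> 0 T + (L - l)" and avoid: "\<forall>t\<in>{0<..T}. \<gamma>' t \<notin> F"
    using lipschitz_path_perturb_avoiding[OF lip T1(1) T2(1) less_imp_le[OF T2(2)] F far \<rho>, of "L - l"] lL
    by (metis diff_gt_0_iff_gt)
  have "cont_along a \<gamma>' T"
    using cont_along_rescaled_avoiding[OF cont_F lip' T] \<gamma>'0 \<gamma>0 len' len avoid by simp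
  then have "cont_along a \<gamma> T"
    using transfer lipschitz_on_continuous_on[OF lip'] \<gamma>'0 \<gamma>0 near tail T2 by auto
  then show False using nc by contradiction
qed

lemma dfs_singular_filtration:
  assumes ec: "endlessly_continuable a"
  shows "dfs (singular_filtration a)"
  unfolding dfs_def
proof (intro conjI allI impI)
  have germ: "conv_germ a" using ec by (simp add: endlessly_continuable_def)
  fix L :: real assume "0 \<le> L"
  then obtain F where F: "finite F" "\<forall>\<gamma>. lipschitz_path \<gamma> 1 \<and> \<gamma> 0 = 0 \<and> path_len \<gamma> 0 1 < L + 1 \<and>
      \<gamma> ` {0<..1} \<subseteq> - F \<longrightarrow> cont_along a \<gamma> 1"
    using ec unfolding endlessly_continuable_def by (metis add_nonneg_pos zero_less_one)
  have "singular_filtration a L \<subseteq> F"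
    using singular_endpoint_mem[OF germ F] by (auto simp: singular_filtration_def)
  then show "finite (singular_filtration a L)" using F(1) by (rule finite_subset)
next
  fix L1 L2 :: real assume "0 \<le> L1 \<and> L1 \<le> L2"
  then show "singular_filtration a L1 \<subseteq> singular_filtration a L2"
    unfolding singular_filtration_def singular_endpoint_def by force
next
  obtain \<rho> where \<rho>: "\<rho> > 0" "ereal \<rho> \<le> conv_radius a"
    using ec conv_germ_radius by (auto simp: endlessly_continuable_def)
  have "\<not> singular_endpoint a (\<rho> / 2) \<omega>" for \<omega>
  proof
    assume "singular_endpoint a (\<rho> / 2) \<omega>"
    then obtain \<gamma> T C where lip: "C-lipschitz_on {0..T} \<gamma>" and "0 \<le> T" "\<gamma> 0 = 0"
      and len: "path_len \<gamma> 0 T \<le> \<rho> / 2" and nc: "\<not> cont_along a \<gamma> T"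
      unfolding singular_endpoint_def by blast
    then have "\<gamma> ` {0..T} \<subseteq> ball 0 \<rho>"
      using norm_le_path_len[OF lip] \<rho>(1) by force
    then show False
      using cont_along_in_disc[OF \<rho>(2,1) lipschitz_on_continuous_on[OF lip]] nc by blast
  qed
  then show "\<exists>\<delta>>0. singular_filtration a \<delta> = {}"
    using \<rho>(1) by (intro exI[of _ "\<rho> / 2"]) (auto simp: singular_filtration_def)
qed

lemma omega_continuable_singular_filtration:
  assumes germ: "conv_germ a"
  shows "omega_continuable (singular_filtration a) a"
  unfolding omega_continuable_def
proof (intro conjI allI impI germ)
  fix \<gamma> T assume "allowed (singular_filtration a) \<gamma> T"
  then obtain C where lip: "C-lipschitz_on {0..T} \<gamma>" and T: "0 \<le> T" and \<gamma>0: "\<gamma> 0 = 0"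
    and M: "\<forall>t\<in>{0..T}. (path_len \<gamma> 0 t, \<gamma> t) \<in> M_dfs (singular_filtration a)"
    by (auto simp: allowed_def lipschitz_path_def)
  show "cont_along a \<gamma> T"
  proof (rule ccontr)
    assume "\<not> cont_along a \<gamma> T"
    then obtain \<tau> where \<tau>: "\<tau> \<in> {0..T}" "\<not> cont_along a \<gamma> \<tau>" "\<And>t. 0 \<le> t \<Longrightarrow> t < \<tau> \<Longrightarrow> cont_along a \<gamma> t"
      using cont_along_first_obstruction[OF lipschitz_on_continuous_on[OF lip] T] by blast
    have lip\<tau>: "C-lipschitz_on {0..\<tau>} \<gamma>" using lipschitz_on_subset[OF lip] \<tau>(1) by auto
    then have "\<gamma> \<tau> \<in> singular_filtration a (path_len \<gamma> 0 \<tau>)"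
      unfolding singular_filtration_def singular_endpoint_def using \<tau> \<gamma>0 by fastforce
    then have "(path_len \<gamma> 0 \<tau>, \<gamma> \<tau>) \<in> S_dfs (singular_filtration a)"
      using path_len_nonneg[OF lip\<tau>] \<tau>(1) by (simp add: S_dfs_def)
    then show False using M \<tau>(1) closure_subset by (force simp: M_dfs_def)
  qed
qed

lemma closure_S_dfs_subset:
  assumes "dfs \<Omega>" "\<Omega> \<delta> = {}" "0 \<le> L"
  shows "closure (S_dfs \<Omega>) \<subseteq> ({\<delta>..} \<times> UNIV) \<inter> (({L..} \<times> UNIV) \<union> (UNIV \<times> \<Omega> L))"
proof (rule closure_minimal)
  have fin: "finite (\<Omega> L)" and mono: "\<And>l. 0 \<le> l \<Longrightarrow> l \<le> L' \<Longrightarrow> \<Omega> l \<subseteq> \<Omega> L'" for L'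
    using assms by (auto simp: dfs_def)
  show "closed (({\<delta>..} \<times> UNIV) \<inter> (({L..} \<times> UNIV) \<union> (UNIV \<times> \<Omega> L)))"
    using fin by (intro closed_Int closed_Un closed_Times closed_atLeast closed_UNIV finite_imp_closed)
  show "S_dfs \<Omega> \<subseteq> ({\<delta>..} \<times> UNIV) \<inter> (({L..} \<times> UNIV) \<union> (UNIV \<times> \<Omega> L))"
  proof
    fix p assume "p \<in> S_dfs \<Omega>"
    then obtain l w where p: "p = (l, w)" "0 \<le> l" "w \<in> \<Omega> l" by (auto simp: S_dfs_def)
    have "\<delta> \<le> l" using mono[of l \<delta>] assms(2) p by (cases "l \<le> \<delta>") auto
    moreover have "L \<le> l \<or> w \<in> \<Omega> L" using mono[of l L] p by (cases "l \<le> L") auto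
    ultimately show "p \<in> ({\<delta>..} \<times> UNIV) \<inter> (({L..} \<times> UNIV) \<union> (UNIV \<times> \<Omega> L))" using p by auto
  qed
qed

lemma endlessly_continuable_if_omega_continuable:
  assumes D: "dfs \<Omega>" and oc: "omega_continuable \<Omega> a"
  shows "endlessly_continuable a"
  unfolding endlessly_continuable_def
proof (intro conjI allI impI)
  show "conv_germ a" using oc by (simp add: omega_continuable_def)
  obtain \<delta> where \<delta>: "\<delta> > 0" "\<Omega> \<delta> = {}" using D by (auto simp: dfs_def)
  fix L :: real assume L: "L > 0"
  have "cont_along a \<gamma> 1"
    if lp: "lipschitz_path \<gamma> 1" and \<gamma>0: "\<gamma> 0 = 0" and len: "path_len \<gamma> 0 1 < L"
      and avoid: "\<gamma> ` {0<..1} \<subseteq> - \<Omega> L" for \<gamma>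
  proof -
    obtain C where lip: "C-lipschitz_on {0..1} \<gamma>" using lp by (auto simp: lipschitz_path_def)
    have "(path_len \<gamma> 0 t, \<gamma> t) \<in> M_dfs \<Omega>" if t: "t \<in> {0..1}" for t
    proof (cases "t = 0")
      case True
      then have "(path_len \<gamma> 0 t, \<gamma> t) \<notin> {\<delta>..} \<times> UNIV" using \<delta>(1) by (simp add: path_len_refl)
      then show ?thesis
        using closure_S_dfs_subset[OF D \<delta>(2) less_imp_le[OF L]] unfolding M_dfs_def by blast
    next
      case False
      then have "t \<in> {0<..1}" using t by auto
      then have "\<gamma> t \<notin> \<Omega> L" "path_len \<gamma> 0 t < L"
        using avoid len path_len_mono[OF lip, of t] by (blast, auto)
      then have "(path_len \<gamma> 0 t, \<gamma> t) \<notin> ({L..} \<times> UNIV) \<union> (UNIV \<times> \<Omega> L)" by auto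
      then show ?thesis
        using closure_S_dfs_subset[OF D \<delta>(2) less_imp_le[OF L]] unfolding M_dfs_def by blast
    qed
    then have "allowed \<Omega> \<gamma> 1" using lp \<gamma>0 by (simp add: allowed_def)
    then show ?thesis using oc by (simp add: omega_continuable_def)
  qed
  then show "\<exists>F. finite F \<and> (\<forall>\<gamma>. lipschitz_path \<gamma> 1 \<and> \<gamma> 0 = 0 \<and> path_len \<gamma> 0 1 < L \<and>
      \<gamma> ` {0<..1} \<subseteq> - F \<longrightarrow> cont_along a \<gamma> 1)"
    using D L by (intro exI[of _ "\<Omega> L"]) (auto simp: dfs_def)
qed

theorem theorem2p13:
  shows "(\<forall>a. endlessly_continuable a \<longleftrightarrow> (\<exists>\<Omega>. dfs \<Omega> \<and> omega_continuable \<Omega> a)) \<and>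
         (\<forall>\<phi>. resurgent \<phi> \<longleftrightarrow> (\<exists>\<Omega>. dfs \<Omega> \<and> omega_resurgent \<Omega> \<phi>))"
proof -
  have "endlessly_continuable a \<longleftrightarrow> (\<exists>\<Omega>. dfs \<Omega> \<and> omega_continuable \<Omega> a)" for a
  proof
    assume ec: "endlessly_continuable a"
    then have "omega_continuable (singular_filtration a) a"
      by (intro omega_continuable_singular_filtration) (simp add: endlessly_continuable_def)
    then show "\<exists>\<Omega>. dfs \<Omega> \<and> omega_continuable \<Omega> a"
      using dfs_singular_filtration[OF ec] by blast
  qed (use endlessly_continuable_if_omega_continuable in blast)
  then show ?thesis by (simp add: resurgent_def omega_resurgent_def)
qed

end
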